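(* Consider the second order operator $\mathcal{L}$ on functions of $(x,y)\in\mathbb{R}^2$, with $Z=x+iy$, whose carré du champ $\Gamma$ and action on coordinates are given (using complex notation, with $\Gamma$ complex bilinear and $\mathcal{L}$ complex linear) by $$\Gamma(Z,Z)=\bar Z-Z^2,\quad \Gamma(\bar Z,\bar Z)=Z-\bar Z^2,\quad \Gamma(Z,\bar Z)=\tfrac12(1-Z\bar Z),\quad \mathcal{L}(Z)=-Z,\quad \mathcal{L}(\bar Z)=-\bar Z.$$ Let $D(Z,\bar Z)=\Gamma(Z,\bar Z)^2-\Gamma(Z,Z)\Gamma(\bar Z,\bar Z)=\tfrac14(1-Z\bar Z)^2-(\bar Z-Z^2)(Z-\bar Z^2)$. Let $\Omega_D$ be the deltoid domain (the bounded open region of $\mathbb{C}$ enclosed by the deltoid curve). Then: (1) $D(Z,\bar Z)>0$ on $\Omega_D$; (2) $\{D(Z,\bar Z)=0\}$ is the deltoid curve, i.e. the boundary of $\Omega_D$; (3) the reversible measure of $\mathcal{L}$ on $\Omega_D$ has density (up to a multiplicative constant) $D(Z,\bar Z)^{-1/2}$ with respect to Lebesgue measure $dx\,dy$, i.e. with $\rho=D^{-1/2}$ one has $\mathcal{L}f=\rho^{-1}\sum_{i,j}\partial_i(\rho\, g^{ij}\partial_j f)$ on $\Omega_D$, where $(g^{ij})$ is the matrix $\Gamma(x_i,x_j)$ in the real coordinates $(x_1,x_2)=(x,y)$; (4) if $z\in\mathbb{R}^2$, $z_k=e^{i\,u_k\cdot z}$ ($k=1,2,3$) with $u_1=(1,0)$,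 $u_2=(-\tfrac12,\tfrac{\sqrt3}2)$, $u_3=(-\tfrac12,-\tfrac{\sqrt3}2)$, and $Z=\frac13(z_1+z_2+z_3)$, then $$D(Z,\bar Z)=-\frac{(z_1-z_2)^2(z_2-z_3)^2(z_3-z_1)^2}{2^2\,3^3}.$$
   Context: The deltoid (Steiner hypocycloid) curve relevant here is the hypocycloid with cusps at the three cube roots of unity $1,j,\bar j$, parametrized by $t\mapsto \frac13(2e^{it}+e^{-2it})$, $t\in[0,2\pi]$; $\Omega_D$ is the bounded open region it encloses, which is the interior of the image of $\mathbb{R}^2$ under the map $z\mapsto \frac13\sum_k e^{i u_k\cdot z}$. Real and complex conventions: $\Gamma(Z,Z)=\Gamma(x,x)-\Gamma(y,y)+2i\Gamma(x,y)$, $\Gamma(Z,\bar Z)=\Gamma(x,x)+\Gamma(y,y)$, $\mathcal{L}(Z)=\mathcal{L}(x)+i\mathcal{L}(y)$. *)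

theory Defs
  imports "HOL-Analysis.Analysis"
begin

definition deltoid_curve :: "complex set" where
  "deltoid_curve = (\<lambda>t. (2 * exp (\<i> * of_real t) + exp (- 2 * \<i> * of_real t)) / 3) ` {0..2*pi}"

definition deltoid_domain :: "complex set" where
  "deltoid_domain = inside deltoid_curve"

definition GammaZZ :: "complex \<Rightarrow> complex" where
  "GammaZZ Z = cnj Z - Z^2"
definition GammaZbZb :: "complex \<Rightarrow> complex" where
  "GammaZbZb Z = Z - (cnj Z)^2"
definition GammaZZb :: "complex \<Rightarrow> complex" where
  "GammaZZb Z = (1 - Z * cnj Z) / 2"

definition Dfun :: "complex \<Rightarrow> complex" where
  "Dfun Z = (GammaZZb Z)^2 - GammaZZ Z * GammaZbZb Z"

text \<open>Real coefficients, via Gamma(Z,Z) = Gxx - Gyy + 2i Gxy, Gamma(Z,Zbar) = Gxx + Gyy.\<close>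
definition gxx :: "complex \<Rightarrow> real" where
  "gxx Z = Re ((GammaZZb Z + GammaZZ Z) / 2)"
definition gyy :: "complex \<Rightarrow> real" where
  "gyy Z = Re ((GammaZZb Z - GammaZZ Z) / 2)"
definition gxy :: "complex \<Rightarrow> real" where
  "gxy Z = Im (GammaZZ Z) / 2"

text \<open>L(Z) = -Z, i.e. L(x) = -x, L(y) = -y.\<close>
definition Lx :: "complex \<Rightarrow> real" where "Lx Z = - Re Z"
definition Ly :: "complex \<Rightarrow> real" where "Ly Z = - Im Z"

definition pdx :: "(complex \<Rightarrow> real) \<Rightarrow> complex \<Rightarrow> real" where
  "pdx f Z = deriv (\<lambda>t. f (Complex t (Im Z))) (Re Z)"
definition pdy :: "(complex \<Rightarrow> real) \<Rightarrow> complex \<Rightarrow> real" where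
  "pdy f Z = deriv (\<lambda>t. f (Complex (Re Z) t)) (Im Z)"

definition Lop :: "(complex \<Rightarrow> real) \<Rightarrow> complex \<Rightarrow> real" where
  "Lop f Z = gxx Z * pdx (pdx f) Z + gxy Z * pdx (pdy f) Z
           + gxy Z * pdy (pdx f) Z + gyy Z * pdy (pdy f) Z
           + Lx Z * pdx f Z + Ly Z * pdy f Z"

definition rho :: "complex \<Rightarrow> real" where
  "rho Z = (Re (Dfun Z)) powr (-1/2)"

end

theory Submission
  imports Defs "HOL-Complex_Analysis.Contour_Integration"
begin

text \<open>
  In real coordinates D = ((1 - |Z|^2)/2)^2 - |conj Z - Z^2|^2.
  The deltoid is the image of the unit circle under r \<mapsto> (2r + conj(r)^2)/3, on which D vanishes;
  conversely, at a zero of D with w = conj Z - Z^2 \<noteq> 0 the number r = \<Gamma>(Z, conj Z)/w is unimodular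
  and is mapped to Z (if w = 0, Z is a cube root of unity). The map is injective on the circle, so
  the deltoid is a Jordan curve. D vanishes only on the curve, is negative for |Z| > 1 and equals
  1/4 at 0; hence 0 is not in the connected, unbounded outside, and D > 0 on the connected inside.

  For the density: \<Gamma>(x_i, D) = -3 x_i D, so \<rho> = D^(-1/2) satisfies \<Gamma>(x_i, \<rho>)/\<rho> = 3/2 x_i,
  while \<Sum>_j \<partial>_j \<Gamma>(x_i, x_j) = -5/2 x_i; the two add up to -x_i = L(x_i), which is exactly what
  makes the divergence form agree with L.

  For the last identity, conj z_k = 1/z_k and z_1 z_2 z_3 = 1 turn it into a rational identity in
  z_1 and z_2.
\<close>

definition deltoid_poly :: "real \<Rightarrow> real \<Rightarrow> real" where
  "deltoid_poly x y = ((1 - x^2 - y^2)/2)^2 - ((x - x^2 + y^2)^2 + (y + 2*x*y)^2)"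

lemma Dfun_eq_deltoid_poly: "Dfun Z = of_real (deltoid_poly (Re Z) (Im Z))"
  by (simp add: Dfun_def GammaZZ_def GammaZZb_def GammaZbZb_def deltoid_poly_def complex_eq_iff
      power2_eq_square algebra_simps)

lemma Dfun_eq_norms: "Dfun Z = of_real (((1 - norm Z ^ 2)/2)^2 - norm (cnj Z - Z^2) ^ 2)"
  unfolding Dfun_eq_deltoid_poly of_real_eq_iff cmod_power2
  by (simp add: deltoid_poly_def power2_eq_square algebra_simps)

lemma Im_Dfun: "Im (Dfun Z) = 0"
  by (simp add: Dfun_eq_norms)

lemma Re_Dfun: "Re (Dfun Z) = ((1 - norm Z ^ 2)/2)^2 - norm (cnj Z - Z^2) ^ 2"
  unfolding Dfun_eq_norms by (rule Re_complex_of_real)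

lemma gxx_Complex: "gxx (Complex x y) = (1 + 2*x - 3*x^2 + y^2)/4"
  by (simp add: gxx_def GammaZZ_def GammaZZb_def power2_eq_square field_simps)

lemma gyy_Complex: "gyy (Complex x y) = (1 - 2*x + x^2 - 3*y^2)/4"
  by (simp add: gyy_def GammaZZ_def GammaZZb_def power2_eq_square field_simps)

lemma gxy_Complex: "gxy (Complex x y) = (- y - 2*x*y)/2"
  by (simp add: gxy_def GammaZZ_def power2_eq_square algebra_simps)

lemma cnj_eq_inverse_if_norm_1: "norm (r::complex) = 1 \<Longrightarrow> cnj r = inverse r"
  by (simp add: divide_conv_cnj inverse_eq_divide)

lemma Dfun_mean_of_unimodular:
  assumes "norm z1 = 1" "norm z2 = 1" "norm z3 = 1" and prod: "z1 * z2 * z3 = 1"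
  shows "Dfun ((z1 + z2 + z3) / 3) = - ((z1 - z2)^2 * (z2 - z3)^2 * (z3 - z1)^2) / (2^2 * 3^3)"
proof -
  have nz: "z1 \<noteq> 0" "z2 \<noteq> 0" using assms by auto
  have z3: "z3 = inverse (z1 * z2)"
    using prod by (metis mult.assoc mult.commute inverse_unique)
  have "cnj z1 = inverse z1" "cnj z2 = inverse z2" "cnj z3 = z1 * z2"
    using assms z3 by (simp_all add: cnj_eq_inverse_if_norm_1)
  then show ?thesis
    unfolding Dfun_def GammaZZ_def GammaZZb_def GammaZbZb_def
    using nz by (simp add: complex_cnj_divide z3 field_simps) algebra
qed

lemma Dfun_mean_of_roots:
  fixes a b :: real
  defines "z1 \<equiv> exp (\<i> * of_real a)"
    and "z2 \<equiv> exp (\<i> * of_real (- a / 2 + sqrt 3 / 2 * b))"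
    and "z3 \<equiv> exp (\<i> * of_real (- a / 2 - sqrt 3 / 2 * b))"
  shows "Dfun ((z1 + z2 + z3) / 3) = - ((z1 - z2)^2 * (z2 - z3)^2 * (z3 - z1)^2) / (2^2 * 3^3)"
proof (rule Dfun_mean_of_unimodular)
  have "z1 * z2 * z3 = exp (\<i> * of_real a + \<i> * of_real (- a / 2 + sqrt 3 / 2 * b)
                             + \<i> * of_real (- a / 2 - sqrt 3 / 2 * b))"
    by (simp add: z1_def z2_def z3_def exp_add)
  also have "\<dots> = 1" by (simp add: algebra_simps)
  finally show "z1 * z2 * z3 = 1" .
qed (simp_all add: z1_def z2_def z3_def)

definition deltoid_point :: "complex \<Rightarrow> complex" where
  "deltoid_point r = (2*r + cnj r ^ 2)/3"

lemma deltoid_curve_eq_image: "deltoid_curve = deltoid_point ` sphere 0 1"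
proof -
  have exp_neg_2i: "exp (- 2 * \<i> * of_real t) = cnj (exp (\<i> * of_real t)) ^ 2" for t
    by (simp add: exp_cnj mult.assoc flip: exp_of_nat_mult)
  have "deltoid_curve \<subseteq> deltoid_point ` sphere 0 1"
    unfolding deltoid_curve_def deltoid_point_def using exp_neg_2i by auto
  moreover have "deltoid_point r \<in> deltoid_curve" if "norm r = 1" for r
  proof -
    have "0 \<le> Arg2pi r" "Arg2pi r < 2*pi" "r = exp (\<i> * of_real (Arg2pi r))"
      using Arg2pi[of r] that by (auto simp: is_Arg_def)
    then show ?thesis unfolding deltoid_curve_def deltoid_point_def
      using exp_neg_2i[of "Arg2pi r"] by (intro image_eqI[of _ _ "Arg2pi r"]) auto
  qed
  ultimately show ?thesis by auto
qed

lemma Dfun_deltoid_point: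
  assumes "norm r = 1"
  shows "Dfun (deltoid_point r) = 0"
proof -
  have "r \<noteq> 0" and cnj_r: "cnj r = inverse r"
    using assms by (auto simp: cnj_eq_inverse_if_norm_1)
  then show ?thesis
    unfolding Dfun_def GammaZZ_def GammaZbZb_def GammaZZb_def deltoid_point_def
    by (simp add: complex_cnj_divide cnj_r field_simps) algebra
qed

lemma deltoid_point_Gamma_ratio:
  assumes D: "Dfun Z = 0" and w: "GammaZZ Z \<noteq> 0"
  shows "norm (GammaZZb Z / GammaZZ Z) = 1" and "deltoid_point (GammaZZb Z / GammaZZ Z) = Z"
proof -
  define w G where "w = GammaZZ Z" and "G = GammaZZb Z"
  have cnj_G: "cnj G = G"
    by (simp add: G_def GammaZZb_def)
  have G2: "G^2 = w * cnj w"
    using D by (simp add: Dfun_def GammaZZ_def GammaZbZb_def w_def G_def)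
  have "norm G ^ 2 = norm w ^ 2"
    using arg_cong[OF G2, of norm] by (simp add: norm_mult norm_power power2_eq_square)
  then have "norm G = norm w" by (simp add: power2_eq_iff_nonneg)
  then show "norm (GammaZZb Z / GammaZZ Z) = 1"
    using w by (simp add: norm_divide w_def G_def)
  have "3*Z*w*cnj w - 2*G*cnj w - w^2 = -4*Z*Dfun Z"
    unfolding Dfun_def GammaZZ_def GammaZbZb_def GammaZZb_def w_def G_def
    by (simp add: field_simps power2_eq_square)
  then have "3*Z*w*cnj w - 2*G*cnj w - w^2 = 0" using D by simp
  moreover have "cnj (G/w) ^ 2 = w / cnj w"
  proof -
    have "cnj (G/w) ^ 2 = G^2 / (cnj w)^2" by (simp add: cnj_G power_divide)
    also have "\<dots> = w / cnj w" using G2 w by (simp add: w_def power2_eq_square field_simps)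
    finally show ?thesis .
  qed
  ultimately show "deltoid_point (GammaZZb Z / GammaZZ Z) = Z"
    using w by (simp add: deltoid_point_def w_def G_def field_simps power2_eq_square)
qed

lemma Dfun_eq_0_iff: "Dfun Z = 0 \<longleftrightarrow> Z \<in> deltoid_curve"
proof
  assume D: "Dfun Z = 0"
  show "Z \<in> deltoid_curve"
    unfolding deltoid_curve_eq_image
  proof (cases "GammaZZ Z = 0")
    case True
    then have "GammaZZb Z = 0" using D by (simp add: Dfun_def)
    then have "Z * cnj Z = 1" by (simp add: GammaZZb_def)
    moreover have cnj_Z: "cnj Z = Z^2" using True by (simp add: GammaZZ_def)
    ultimately have "Z^3 = 1" by (simp add: power3_eq_cube power2_eq_square mult.assoc)
    then have "Z = deltoid_point Z"
      using cnj_Z by (simp add: deltoid_point_def field_simps power2_eq_square power3_eq_cube)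
    moreover have "norm Z = 1"
    proof -
      have "norm Z ^ 2 = 1"
        using \<open>Z * cnj Z = 1\<close> complex_norm_square[of Z] by (metis of_real_eq_1_iff)
      then show ?thesis using norm_ge_zero[of Z] by (auto simp: power2_eq_1_iff)
    qed
    ultimately show "Z \<in> deltoid_point ` sphere 0 1" by (metis image_eqI mem_sphere_0)
  next
    case False
    then show "Z \<in> deltoid_point ` sphere 0 1"
      using deltoid_point_Gamma_ratio[OF D] by (metis image_eqI mem_sphere_0)
  qed
next
  assume "Z \<in> deltoid_curve"
  then show "Dfun Z = 0" unfolding deltoid_curve_eq_image using Dfun_deltoid_point by auto
qed

lemma inj_on_deltoid_point: "inj_on deltoid_point (sphere 0 1)"
proof
  fix a b :: complex
  assume "a \<in> sphere 0 1" "b \<in> sphere 0 1" and eq: "deltoid_point a = deltoid_point b"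
  then have a: "norm a = 1" and b: "norm b = 1" by auto
  show "a = b"
  proof (rule ccontr)
    assume "a \<noteq> b"
    have "a \<noteq> 0" "b \<noteq> 0" using a b by auto
    moreover have "cnj a = inverse a" "cnj b = inverse b"
      using a b by (simp_all add: cnj_eq_inverse_if_norm_1)
    ultimately have "(a - b) * (2 * a^2 * b^2 - (a + b)) = 0"
      using eq unfolding deltoid_point_def by (simp add: field_simps) algebra
    with \<open>a \<noteq> b\<close> have "a + b = 2 * a^2 * b^2" by simp
    then have "norm (a + b) = norm a + norm b"
      using a b by (simp add: norm_mult norm_power)
    then have "norm a *\<^sub>R b = norm b *\<^sub>R a" by (simp add: norm_triangle_eq)
    with a b \<open>a \<noteq> b\<close> show False by simp
  qed
qed

lemma deltoid_curve_simple_closed_path: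
  obtains g where "simple_path g" "pathfinish g = pathstart g" "path_image g = deltoid_curve"
proof
  let ?g = "deltoid_point \<circ> circlepath 0 1"
  show "simple_path ?g"
    by (rule simple_path_continuous_image)
      (auto simp: simple_path_circlepath inj_on_deltoid_point deltoid_point_def intro!: continuous_intros)
  show "pathfinish ?g = pathstart ?g"
    by (simp add: pathstart_compose pathfinish_compose)
  show "path_image ?g = deltoid_curve"
    by (simp add: path_image_compose deltoid_curve_eq_image)
qed

lemma frontier_deltoid_domain: "frontier deltoid_domain = deltoid_curve"
  unfolding deltoid_domain_def
  by (metis deltoid_curve_simple_closed_path Jordan_inside_outside)

lemma connected_continuous_pos:
  fixes f :: "'a::topological_space \<Rightarrow> real"
  assumes "connected S" "continuous_on S f" "\<forall>x\<in>S. f x \<noteq> 0" "a \<in> S" "b \<in> S" "f a > 0"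
  shows "f b > 0"
proof (rule ccontr)
  assume "\<not> f b > 0"
  with assms have "f b < 0" by force
  moreover have "connected (f ` S)"
    using assms by (intro connected_continuous_image)
  ultimately have "0 \<in> f ` S"
    using assms(4,5,6) unfolding connected_iff_interval by (metis image_eqI less_eq_real_def)
  with assms(3) show False by auto
qed

lemma Re_Dfun_neg_outside_disc:
  assumes "norm Z > 1"
  shows "Re (Dfun Z) < 0"
proof -
  define w where "w = cnj Z - Z^2"
  have "norm w \<ge> norm Z ^ 2 - norm Z"
    using norm_triangle_ineq2[of "Z^2" "cnj Z"] by (simp add: w_def norm_power norm_minus_commute)
  moreover have "\<bar>(1 - norm Z ^ 2)/2\<bar> < norm Z ^ 2 - norm Z"
  proof -
    have "0 < (norm Z - 1)^2" "1 < norm Z ^ 2"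
      using assms by (simp_all add: one_less_power)
    then show ?thesis by (simp add: power2_eq_square algebra_simps field_simps)
  qed
  ultimately have "\<bar>(1 - norm Z ^ 2)/2\<bar> ^ 2 < norm w ^ 2"
    by (intro power_strict_mono) auto
  then show ?thesis
    unfolding Re_Dfun power2_abs w_def by linarith
qed

lemma Dfun_pos_in_deltoid_domain:
  assumes "Z \<in> deltoid_domain"
  shows "Im (Dfun Z) = 0 \<and> Re (Dfun Z) > 0"
proof -
  obtain g where g: "simple_path g" "pathfinish g = pathstart g" "path_image g = deltoid_curve"
    by (rule deltoid_curve_simple_closed_path)
  note Jordan = Jordan_inside_outside[OF g(1,2), unfolded g(3)]
  have cont: "continuous_on S (\<lambda>Z. Re (Dfun Z))" for S
    unfolding Dfun_def GammaZZ_def GammaZbZb_def GammaZZb_def by (intro continuous_intros) auto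
  have "Re (Dfun Z) \<noteq> 0" if "Z \<notin> deltoid_curve" for Z
    using that Dfun_eq_0_iff[of Z] Im_Dfun[of Z] by (simp add: complex_eq_iff)
  moreover have "inside deltoid_curve \<subseteq> - deltoid_curve" "outside deltoid_curve \<subseteq> - deltoid_curve"
    using Jordan by blast+
  ultimately have nonzero_in: "\<forall>Z\<in>inside deltoid_curve. Re (Dfun Z) \<noteq> 0"
    and nonzero_out: "\<forall>Z\<in>outside deltoid_curve. Re (Dfun Z) \<noteq> 0"
    by blast+
  have pos0: "Re (Dfun 0) > 0"
    by (simp add: Dfun_def GammaZZ_def GammaZbZb_def GammaZZb_def)
  obtain Z1 where Z1: "Z1 \<in> outside deltoid_curve" "norm Z1 > 1"
    using Jordan unfolding bounded_iff by (meson not_le)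
  have "0 \<notin> outside deltoid_curve"
    using connected_continuous_pos[of "outside deltoid_curve" "\<lambda>Z. Re (Dfun Z)" 0 Z1]
      Jordan Z1(1) pos0 cont nonzero_out Re_Dfun_neg_outside_disc[OF Z1(2)] by auto
  moreover have "0 \<notin> deltoid_curve"
    using pos0 Dfun_eq_0_iff by force
  ultimately have "0 \<in> inside deltoid_curve"
    using Jordan by blast
  then have "Re (Dfun Z) > 0"
    using connected_continuous_pos[of "inside deltoid_curve" "\<lambda>Z. Re (Dfun Z)" 0 Z]
      Jordan assms pos0 cont nonzero_in unfolding deltoid_domain_def by blast
  then show ?thesis by (simp add: Im_Dfun)
qed

lemma pdx_has_real_derivative:
  assumes "g differentiable (at (Complex x y))"
  shows "((\<lambda>t. g (Complex t y)) has_real_derivative pdx g (Complex x y)) (at x)"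
proof -
  have "((\<lambda>t. Complex t y) has_derivative (\<lambda>h. of_real h)) (at x)"
    unfolding Complex_eq by (auto intro!: derivative_eq_intros)
  then have "(\<lambda>t. Complex t y) differentiable (at x)" by (rule differentiableI)
  from differentiable_chain_at[OF this] have "(\<lambda>t. g (Complex t y)) differentiable (at x)"
    using assms by (simp add: o_def)
  then show ?thesis
    by (simp add: pdx_def DERIV_deriv_iff_real_differentiable)
qed

lemma pdy_has_real_derivative:
  assumes "g differentiable (at (Complex x y))"
  shows "((\<lambda>s. g (Complex x s)) has_real_derivative pdy g (Complex x y)) (at y)"
proof -
  have "((\<lambda>s. Complex x s) has_derivative (\<lambda>h. \<i> * of_real h)) (at y)"
    unfolding Complex_eq by (auto intro!: derivative_eq_intros)
  then have "(\<lambda>s. Complex x s) differentiable (at y)" by (rule differentiableI)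
  from differentiable_chain_at[OF this] have "(\<lambda>s. g (Complex x s)) differentiable (at y)"
    using assms by (simp add: o_def)
  then show ?thesis
    by (simp add: pdy_def DERIV_deriv_iff_real_differentiable)
qed

lemma pdx_eqI: "((\<lambda>t. g (Complex t y)) has_real_derivative d) (at x) \<Longrightarrow> pdx g (Complex x y) = d"
  by (simp add: pdx_def DERIV_imp_deriv)

lemma pdy_eqI: "((\<lambda>s. g (Complex x s)) has_real_derivative d) (at y) \<Longrightarrow> pdy g (Complex x y) = d"
  by (simp add: pdy_def DERIV_imp_deriv)

definition deltoid_poly_dx :: "real \<Rightarrow> real \<Rightarrow> real" where
  "deltoid_poly_dx x y = - x * (1 - x^2 - y^2) - 2 * (x - x^2 + y^2) * (1 - 2*x) - 4 * y^2 * (1 + 2*x)"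

definition deltoid_poly_dy :: "real \<Rightarrow> real \<Rightarrow> real" where
  "deltoid_poly_dy x y = - y * (1 - x^2 - y^2) - 4 * y * (x - x^2 + y^2) - 2 * y * (1 + 2*x)^2"

lemma deltoid_poly_has_derivative_x:
  "((\<lambda>t. deltoid_poly t y) has_real_derivative deltoid_poly_dx x y) (at x)"
  unfolding deltoid_poly_def deltoid_poly_dx_def
  by (auto intro!: derivative_eq_intros) (simp add: field_simps power2_eq_square)

lemma deltoid_poly_has_derivative_y:
  "((\<lambda>s. deltoid_poly x s) has_real_derivative deltoid_poly_dy x y) (at y)"
  unfolding deltoid_poly_def deltoid_poly_dy_def
  by (auto intro!: derivative_eq_intros) (simp add: field_simps power2_eq_square)

lemma gamma_x_deltoid_poly:
  "gxx (Complex x y) * deltoid_poly_dx x y + gxy (Complex x y) * deltoid_poly_dy x y = -3 * x * deltoid_poly x y"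
  unfolding gxx_Complex gxy_Complex deltoid_poly_dx_def deltoid_poly_dy_def deltoid_poly_def
  by (simp add: field_simps power2_eq_square)

lemma gamma_y_deltoid_poly:
  "gxy (Complex x y) * deltoid_poly_dx x y + gyy (Complex x y) * deltoid_poly_dy x y = -3 * y * deltoid_poly x y"
  unfolding gxy_Complex gyy_Complex deltoid_poly_dx_def deltoid_poly_dy_def deltoid_poly_def
  by (simp add: field_simps power2_eq_square)

lemma rho_Complex: "rho (Complex x y) = deltoid_poly x y powr (-1/2)"
  by (simp add: rho_def Dfun_eq_deltoid_poly)

lemma powr_neg_half_derivative:
  assumes "(g has_real_derivative m) (at x)" "g x > 0"
  shows "((\<lambda>t. g t powr (-1/2)) has_real_derivative - (g x powr (-1/2) * m / (2 * g x))) (at x)"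
proof -
  have "g x powr (-1/2 - of_nat 1) = g x powr (-1/2) / g x powr (of_nat 1)"
    by (rule powr_diff)
  then have "g x powr (-1/2 - of_nat 1) = g x powr (-1/2) / g x"
    using assms(2) by simp
  from DERIV_fun_powr[OF assms, of "-1/2", unfolded this] show ?thesis
    by (simp add: field_simps)
qed

(* Stated in the exact shape produced by DERIV_mult' and DERIV_add. *)
lemma pdx_flux:
  fixes f :: "complex \<Rightarrow> real"
  assumes pos: "deltoid_poly x y > 0"
    and dP: "pdx f differentiable (at (Complex x y))" and dQ: "pdy f differentiable (at (Complex x y))"
  shows "pdx (\<lambda>W. rho W * (gxx W * pdx f W + gxy W * pdy f W)) (Complex x y) =
    rho (Complex x y) * ((gxx (Complex x y) * pdx (pdx f) (Complex x y) + (1 - 3*x)/2 * pdx f (Complex x y))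
                        + (gxy (Complex x y) * pdx (pdy f) (Complex x y) + - y * pdy f (Complex x y)))
    + - (rho (Complex x y) * deltoid_poly_dx x y / (2 * deltoid_poly x y))
        * (gxx (Complex x y) * pdx f (Complex x y) + gxy (Complex x y) * pdy f (Complex x y))"
proof -
  have rho: "((\<lambda>t. rho (Complex t y)) has_real_derivative
      - (rho (Complex x y) * deltoid_poly_dx x y / (2 * deltoid_poly x y))) (at x)"
    unfolding rho_Complex by (rule powr_neg_half_derivative[OF deltoid_poly_has_derivative_x pos])
  have g: "((\<lambda>t. gxx (Complex t y)) has_real_derivative (1 - 3*x)/2) (at x)"
          "((\<lambda>t. gxy (Complex t y)) has_real_derivative - y) (at x)"
    unfolding gxx_Complex gxy_Complex by (auto intro!: derivative_eq_intros simp: field_simps)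
  show ?thesis
    by (rule pdx_eqI) (intro DERIV_mult' DERIV_add rho g pdx_has_real_derivative dP dQ)
qed

lemma pdy_flux:
  fixes f :: "complex \<Rightarrow> real"
  assumes pos: "deltoid_poly x y > 0"
    and dP: "pdx f differentiable (at (Complex x y))" and dQ: "pdy f differentiable (at (Complex x y))"
  shows "pdy (\<lambda>W. rho W * (gxy W * pdx f W + gyy W * pdy f W)) (Complex x y) =
    rho (Complex x y) * ((gxy (Complex x y) * pdy (pdx f) (Complex x y) + (-1 - 2*x)/2 * pdx f (Complex x y))
                        + (gyy (Complex x y) * pdy (pdy f) (Complex x y) + - (3*y/2) * pdy f (Complex x y)))
    + - (rho (Complex x y) * deltoid_poly_dy x y / (2 * deltoid_poly x y))
        * (gxy (Complex x y) * pdx f (Complex x y) + gyy (Complex x y) * pdy f (Complex x y))"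
proof -
  have rho: "((\<lambda>s. rho (Complex x s)) has_real_derivative
      - (rho (Complex x y) * deltoid_poly_dy x y / (2 * deltoid_poly x y))) (at y)"
    unfolding rho_Complex by (rule powr_neg_half_derivative[OF deltoid_poly_has_derivative_y pos])
  have g: "((\<lambda>s. gxy (Complex x s)) has_real_derivative (-1 - 2*x)/2) (at y)"
          "((\<lambda>s. gyy (Complex x s)) has_real_derivative - (3*y/2)) (at y)"
    unfolding gxy_Complex gyy_Complex by (auto intro!: derivative_eq_intros simp: field_simps)
  show ?thesis
    by (rule pdy_eqI) (intro DERIV_mult' DERIV_add rho g pdy_has_real_derivative dP dQ)
qed

lemma Lop_eq_divergence_form:
  fixes f :: "complex \<Rightarrow> real"
  assumes pos: "Re (Dfun Z) > 0"
    and dP: "pdx f differentiable (at Z)" and dQ: "pdy f differentiable (at Z)"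
  shows "Lop f Z = (1 / rho Z) *
    (pdx (\<lambda>W. rho W * (gxx W * pdx f W + gxy W * pdy f W)) Z
   + pdy (\<lambda>W. rho W * (gxy W * pdx f W + gyy W * pdy f W)) Z)"
proof -
  obtain x y where Z: "Z = Complex x y" by (metis complex.collapse)
  define D Dx Dy where "D = deltoid_poly x y" and "Dx = deltoid_poly_dx x y" and "Dy = deltoid_poly_dy x y"
  define P Q where "P = pdx f Z" and "Q = pdy f Z"
  define Sx Sy where "Sx = gxx Z * P + gxy Z * Q" and "Sy = gxy Z * P + gyy Z * Q"
  define Tx where "Tx = (gxx Z * pdx (pdx f) Z + (1 - 3*x)/2 * P) + (gxy Z * pdx (pdy f) Z + - y * Q)"
  define Ty where "Ty = (gxy Z * pdy (pdx f) Z + (-1 - 2*x)/2 * P) + (gyy Z * pdy (pdy f) Z + - (3*y/2) * Q)"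
  have D: "D > 0" using pos by (simp add: Z D_def Dfun_eq_deltoid_poly)
  have rho: "rho Z > 0" using D by (simp add: Z rho_Complex D_def)
  have "Dx * Sx + Dy * Sy = P * (gxx Z * Dx + gxy Z * Dy) + Q * (gxy Z * Dx + gyy Z * Dy)"
    by (simp add: Sx_def Sy_def algebra_simps)
  also have "\<dots> = -3 * D * (x * P + y * Q)"
    unfolding Z D_def Dx_def Dy_def gamma_x_deltoid_poly gamma_y_deltoid_poly by (simp add: algebra_simps)
  finally have key: "Dx * Sx + Dy * Sy = -3 * D * (x * P + y * Q)" .
  have "(1 / rho Z) * (pdx (\<lambda>W. rho W * (gxx W * pdx f W + gxy W * pdy f W)) Z
      + pdy (\<lambda>W. rho W * (gxy W * pdx f W + gyy W * pdy f W)) Z)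
    = (1 / rho Z) * ((rho Z * Tx + - (rho Z * Dx / (2 * D)) * Sx) + (rho Z * Ty + - (rho Z * Dy / (2 * D)) * Sy))"
    using pdx_flux[of x y f] pdy_flux[of x y f] D dP dQ
    by (simp add: Z D_def Dx_def Dy_def P_def Q_def Sx_def Sy_def Tx_def Ty_def)
  also have "\<dots> = Tx + Ty - (Dx * Sx + Dy * Sy) / (2 * D)"
    using rho D by (simp add: field_simps)
  also have "\<dots> = Lop f Z"
    using D unfolding key by (simp add: Lop_def Lx_def Ly_def Z Tx_def Ty_def P_def Q_def field_simps)
  finally show ?thesis ..
qed

theorem proposition3p5:
  shows "(\<forall>Z\<in>deltoid_domain. Im (Dfun Z) = 0 \<and> Re (Dfun Z) > 0)
    \<and> {Z. Dfun Z = 0} = deltoid_curve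
    \<and> frontier deltoid_domain = deltoid_curve
    \<and> (\<forall>f :: complex \<Rightarrow> real.
          (\<forall>Z\<in>deltoid_domain. f differentiable (at Z) \<and> pdx f differentiable (at Z)
                               \<and> pdy f differentiable (at Z)) \<longrightarrow>
          (\<forall>Z\<in>deltoid_domain.
             Lop f Z = (1 / rho Z) *
               (pdx (\<lambda>W. rho W * (gxx W * pdx f W + gxy W * pdy f W)) Z
              + pdy (\<lambda>W. rho W * (gxy W * pdx f W + gyy W * pdy f W)) Z)))
    \<and> (\<forall>a b :: real.
          let z1 = exp (\<i> * of_real a);
              z2 = exp (\<i> * of_real (- a / 2 + sqrt 3 / 2 * b));
              z3 = exp (\<i> * of_real (- a / 2 - sqrt 3 / 2 * b));
              Z = (z1 + z2 + z3) / 3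
          in Dfun Z = - ((z1 - z2)^2 * (z2 - z3)^2 * (z3 - z1)^2) / (2^2 * 3^3))"
  using Dfun_pos_in_deltoid_domain Dfun_eq_0_iff frontier_deltoid_domain
    Lop_eq_divergence_form Dfun_mean_of_roots
  by (auto simp: Let_def)

end
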